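(* For each instance \(\mathcal{I}\) of 3-SAT, the graph \(G(\mathcal{I})\) constructed below is weakly chordal.
   Context: A graph is weakly chordal if neither it nor its complement contains an induced cycle of length at least 5. Let \(\mathcal{I}\) have variables \(x_1,\dots,x_k\) and clauses \(C_1,\dots,C_l\), each a disjunction of three literals. \(G(\mathcal{I})\) has vertices: literal vertices \(X=\{x_1,\dots,x_k,\overline{x_1},\dots,\overline{x_k}\}\); for each clause \(C_i\) three vertices \(a_i,c_i,t_i\); and four vertices \(r,p,q,u\). Edges: any two vertices of \(X\) are adjacent except the pairs \(x_j\overline{x_j}\); each \(\{a_i,c_i,t_i\}\) is a triangle; \(c_i\) is adjacent to the literal vertices of the literals occurring in \(C_i\); \(r\) is adjacent to every vertex except \(u\) and the \(t_i\); \(u\) is adjacent to every vertex except \(r\) and the \(t_i\); \(p\) is adjacent to every vertex of \(X\) and to \(q\); \(q\) is adjacent to every vertex of \(X\) and to every \(a_i\); there are no other edges. *)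

theory Defs
  imports Main
begin

definition compl_adj :: "('a \<Rightarrow> 'a \<Rightarrow> bool) \<Rightarrow> 'a \<Rightarrow> 'a \<Rightarrow> bool" where
  "compl_adj E u v \<longleftrightarrow> u \<noteq> v \<and> \<not> E u v"

definition induced_cycle :: "'a set \<Rightarrow> ('a \<Rightarrow> 'a \<Rightarrow> bool) \<Rightarrow> 'a list \<Rightarrow> bool" where
  "induced_cycle V E cs \<longleftrightarrow> length cs \<ge> 3 \<and> distinct cs \<and> set cs \<subseteq> V \<and>
     (\<forall>i < length cs. \<forall>j < length cs. i \<noteq> j \<longrightarrow>
        (E (cs ! i) (cs ! j) \<longleftrightarrow> (j = Suc i mod length cs \<or> i = Suc j mod length cs)))"

definition weakly_chordal :: "'a set \<Rightarrow> ('a \<Rightarrow> 'a \<Rightarrow> bool) \<Rightarrow> bool" where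
  "weakly_chordal V E \<longleftrightarrow>
     (\<forall>cs. induced_cycle V E cs \<longrightarrow> length cs < 5) \<and>
     (\<forall>cs. induced_cycle V (compl_adj E) cs \<longrightarrow> length cs < 5)"

text \<open>A literal (j, True) is x_j, (j, False) is the negation of x_j.  An instance is the number k
  of variables x_1..x_k together with the list of clauses C_1..C_l (clause C_i = cls ! (i-1)),
  each clause being a list of exactly three literals over x_1..x_k.\<close>
type_synonym literal = "nat \<times> bool"
type_synonym sat_inst = "nat \<times> literal list list"

definition wf_instance :: "sat_inst \<Rightarrow> bool" where
  "wf_instance I \<longleftrightarrow> (\<forall>C \<in> set (snd I). length C = 3 \<and> (\<forall>(j, b) \<in> set C. 1 \<le> j \<and> j \<le> fst I))"

datatype vtx = Lit bool nat | Av nat | Cv nat | Tv nat | Rv | Pv | Qv | Uv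

definition is_lit :: "vtx \<Rightarrow> bool" where
  "is_lit v \<longleftrightarrow> (\<exists>b j. v = Lit b j)"

definition is_t :: "vtx \<Rightarrow> bool" where
  "is_t v \<longleftrightarrow> (\<exists>i. v = Tv i)"

definition is_a :: "vtx \<Rightarrow> bool" where
  "is_a v \<longleftrightarrow> (\<exists>i. v = Av i)"

definition GV :: "sat_inst \<Rightarrow> vtx set" where
  "GV I = {Lit b j | b j. 1 \<le> j \<and> j \<le> fst I}
        \<union> {Av i | i. 1 \<le> i \<and> i \<le> length (snd I)}
        \<union> {Cv i | i. 1 \<le> i \<and> i \<le> length (snd I)}
        \<union> {Tv i | i. 1 \<le> i \<and> i \<le> length (snd I)}
        \<union> {Rv, Pv, Qv, Uv}"

definition base_adj :: "sat_inst \<Rightarrow> vtx \<Rightarrow> vtx \<Rightarrow> bool" where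
  "base_adj I u v \<longleftrightarrow>
     (\<exists>b j b' j'. u = Lit b j \<and> v = Lit b' j' \<and> j \<noteq> j')
   \<or> (\<exists>i. (u = Av i \<and> v = Cv i) \<or> (u = Av i \<and> v = Tv i) \<or> (u = Cv i \<and> v = Tv i))
   \<or> (\<exists>i b j. u = Cv i \<and> v = Lit b j \<and> (j, b) \<in> set (snd I ! (i - 1)))
   \<or> (u = Rv \<and> v \<noteq> Uv \<and> \<not> is_t v)
   \<or> (u = Uv \<and> v \<noteq> Rv \<and> \<not> is_t v)
   \<or> (u = Pv \<and> (is_lit v \<or> v = Qv))
   \<or> (u = Qv \<and> (is_lit v \<or> is_a v))"

definition GE :: "sat_inst \<Rightarrow> vtx \<Rightarrow> vtx \<Rightarrow> bool" where
  "GE I u v \<longleftrightarrow> u \<in> GV I \<and> v \<in> GV I \<and> u \<noteq> v \<and> (base_adj I u v \<or> base_adj I v u)"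

end

theory Submission
  imports Defs
begin

(* An induced cycle of length n >= 5, read n-periodically along the integers, gives every
   vertex on it two non-adjacent neighbours on the cycle (its predecessor and successor) and
   two adjacent non-neighbours (the vertices two and three steps ahead).  So neither a
   simplicial vertex (neighbourhood a clique) nor a cosimplicial one (non-neighbourhood
   independent) lies on such a cycle, and vertices can be struck off one kind at a time.
   In G the t_i are simplicial and then r and u are cosimplicial; short local arguments
   exclude a_i, then p and q, then the c_i, and finally the literals, whose non-edges form
   a perfect matching.  In the complement r, u, t_i, q, a_i and p drop out in this order by
   the two criteria alone; a remaining literal would need its complement on one side and
   a clause vertex on the other, forcing two distinct clause vertices at distance three,
   which are adjacent in the complement. *)

(* Only what holds for every period n >= 5 is recorded: distances up to 3 decide adjacency,
   distances up to 4 give distinct vertices. *)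
definition long_hole_walk :: "'a set \<Rightarrow> ('a \<Rightarrow> 'a \<Rightarrow> bool) \<Rightarrow> (int \<Rightarrow> 'a) \<Rightarrow> bool" where
  "long_hole_walk V E w \<longleftrightarrow> (\<forall>k. w k \<in> V
     \<and> E (w k) (w (k + 1)) \<and> E (w (k + 1)) (w k)
     \<and> \<not> E (w k) (w (k + 2)) \<and> \<not> E (w (k + 2)) (w k)
     \<and> \<not> E (w k) (w (k + 3)) \<and> \<not> E (w (k + 3)) (w k)
     \<and> (\<forall>d \<in> {1..4}. w k \<noteq> w (k + d)))"

lemma induced_cycle_periodic:
  assumes cyc: "induced_cycle V E cs" and n: "n = int (length cs)"
  defines "w \<equiv> \<lambda>k. cs ! nat (k mod n)"
  shows "w i \<in> V"
    and "w i = w j \<longleftrightarrow> n dvd i - j"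
    and "\<not> n dvd i - j \<Longrightarrow> E (w i) (w j) \<longleftrightarrow> n dvd j - i - 1 \<or> n dvd i - j - 1"
proof -
  define p where "p k = nat (k mod n)" for k
  have n_pos: "0 < n" using cyc n by (auto simp: induced_cycle_def)
  have p_less: "p k < length cs" for k
    using n_pos n by (simp add: p_def nat_less_iff)
  have p_eq_iff: "p k = p l \<longleftrightarrow> n dvd k - l" for k l
    using n_pos by (simp add: p_def eq_nat_nat_iff mod_eq_dvd_iff)
  have p_Suc: "Suc (p k) mod length cs = p (k + 1)" for k
  proof -
    have "int (Suc (p k) mod length cs) = int (p (k + 1))"
      using n_pos n by (simp add: p_def zmod_int mod_add_right_eq add.commute)
    then show ?thesis by (simp only: of_nat_eq_iff)
  qed
  have w_p: "w k = cs ! p k" for k by (simp add: w_def p_def)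
  show "w i \<in> V"
    using cyc p_less by (auto simp: w_p induced_cycle_def)
  show "w i = w j \<longleftrightarrow> n dvd i - j"
    using cyc p_less by (simp add: w_p induced_cycle_def nth_eq_iff_index_eq p_eq_iff)
  assume "\<not> n dvd i - j"
  then show "E (w i) (w j) \<longleftrightarrow> n dvd j - i - 1 \<or> n dvd i - j - 1"
    using cyc p_less by (simp add: w_p induced_cycle_def p_eq_iff p_Suc diff_diff_eq)
qed

lemma induced_cycle_long_hole_walk:
  assumes cyc: "induced_cycle V E cs" and long: "5 \<le> length cs"
  shows "long_hole_walk V E (\<lambda>k. cs ! nat (k mod int (length cs)))"
proof -
  let ?n = "int (length cs)"
  have not_dvd: "\<not> ?n dvd d" "\<not> ?n dvd - d" if "0 < d" "d \<le> 4" for d :: int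
    using that long zdvd_not_zless[of d ?n] by auto
  show ?thesis
    unfolding long_hole_walk_def
    using induced_cycle_periodic[OF cyc refl] not_dvd long by simp
qed

lemma weakly_chordal_if_no_long_hole_walk:
  assumes "\<And>w. \<not> long_hole_walk V E w" and "\<And>w. \<not> long_hole_walk V (compl_adj E) w"
  shows "weakly_chordal V E"
  using assms induced_cycle_long_hole_walk unfolding weakly_chordal_def by (metis not_less)

lemma long_hole_walk_in: "long_hole_walk V E w \<Longrightarrow> w k \<in> V"
  by (simp add: long_hole_walk_def)

lemma long_hole_walk_adj:
  assumes "long_hole_walk V E w" and "\<bar>a - b\<bar> = 1"
  shows "E (w a) (w b)"
proof -
  have "b = a + 1 \<or> a = b + 1" using assms(2) by arith
  then show ?thesis using assms(1) by (auto simp: long_hole_walk_def)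
qed

lemma long_hole_walk_nonadj:
  assumes "long_hole_walk V E w" and "\<bar>a - b\<bar> \<in> {2, 3}"
  shows "\<not> E (w a) (w b)"
proof -
  have "b = a + 2 \<or> a = b + 2 \<or> b = a + 3 \<or> a = b + 3" using assms(2) by auto
  then show ?thesis using assms(1) by (auto simp: long_hole_walk_def)
qed

lemma long_hole_walk_distinct:
  assumes "long_hole_walk V E w" and "\<bar>a - b\<bar> \<in> {1..4}"
  shows "w a \<noteq> w b"
proof -
  obtain d where d: "d \<in> {1..4}" and "b = a + d \<or> a = b + d" using assms(2) by (auto simp: abs_if)
  moreover have "w c \<noteq> w (c + d)" for c using assms(1) d by (simp add: long_hole_walk_def)
  ultimately show ?thesis by (metis)
qed

lemma long_hole_walk_avoids_simplicial:
  assumes hole: "long_hole_walk V E w"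
    and clique: "\<And>i j. E v (w i) \<Longrightarrow> E v (w j) \<Longrightarrow> w i \<noteq> w j \<Longrightarrow> E (w i) (w j)"
  shows "w k \<noteq> v"
proof
  assume "w k = v"
  moreover have "E (w k) (w (k - 1))" "E (w k) (w (k + 1))" "\<not> E (w (k - 1)) (w (k + 1))"
    "w (k - 1) \<noteq> w (k + 1)"
    by (rule long_hole_walk_adj[OF hole] long_hole_walk_nonadj[OF hole]
        long_hole_walk_distinct[OF hole]; simp)+
  ultimately show False using clique by blast
qed

lemma long_hole_walk_avoids_cosimplicial:
  assumes hole: "long_hole_walk V E w"
    and coclique: "\<And>i j. w i \<noteq> v \<Longrightarrow> w j \<noteq> v \<Longrightarrow> \<not> E v (w i) \<Longrightarrow> \<not> E v (w j) \<Longrightarrow>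
      \<not> E (w i) (w j)"
  shows "w k \<noteq> v"
proof
  assume "w k = v"
  moreover have "\<not> E (w k) (w (k + 2))" "\<not> E (w k) (w (k + 3))" "E (w (k + 2)) (w (k + 3))"
    "w k \<noteq> w (k + 2)" "w k \<noteq> w (k + 3)"
    by (rule long_hole_walk_adj[OF hole] long_hole_walk_nonadj[OF hole]
        long_hole_walk_distinct[OF hole]; simp)+
  ultimately show False using coclique by metis
qed

fun G_adj :: "sat_inst \<Rightarrow> vtx \<Rightarrow> vtx \<Rightarrow> bool" where
  "G_adj I (Lit b j) (Lit b' j') = (j \<noteq> j')"
| "G_adj I (Lit b j) (Cv i) = ((j, b) \<in> set (snd I ! (i - 1)))"
| "G_adj I (Cv i) (Lit b j) = ((j, b) \<in> set (snd I ! (i - 1)))"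
| "G_adj I (Lit b j) v = (v = Rv \<or> v = Uv \<or> v = Pv \<or> v = Qv)"
| "G_adj I (Av i) v = (v = Cv i \<or> v = Tv i \<or> v = Rv \<or> v = Uv \<or> v = Qv)"
| "G_adj I (Cv i) v = (v = Av i \<or> v = Tv i \<or> v = Rv \<or> v = Uv)"
| "G_adj I (Tv i) v = (v = Av i \<or> v = Cv i)"
| "G_adj I Rv v = (v \<noteq> Rv \<and> v \<noteq> Uv \<and> \<not> is_t v)"
| "G_adj I Uv v = (v \<noteq> Uv \<and> v \<noteq> Rv \<and> \<not> is_t v)"
| "G_adj I Pv v = (is_lit v \<or> v = Qv \<or> v = Rv \<or> v = Uv)"
| "G_adj I Qv v = (is_lit v \<or> is_a v \<or> v = Pv \<or> v = Rv \<or> v = Uv)"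

declare is_lit_def [simp] is_t_def [simp] is_a_def [simp]

lemma GE_iff: "GE I u v \<longleftrightarrow> u \<in> GV I \<and> v \<in> GV I \<and> G_adj I u v"
  unfolding GE_def base_adj_def by (cases u; cases v; auto)

lemma special_vertices_in_GV [simp]: "Rv \<in> GV I" "Uv \<in> GV I" "Pv \<in> GV I" "Qv \<in> GV I"
  by (auto simp: GV_def)

locale long_hole_in_G =
  fixes I :: sat_inst and w :: "int \<Rightarrow> vtx"
  assumes hole: "long_hole_walk (GV I) (GE I) w"
begin

lemmas adj = long_hole_walk_adj[OF hole]
  and nonadj = long_hole_walk_nonadj[OF hole]
  and distinct_near = long_hole_walk_distinct[OF hole]
  and in_GV = long_hole_walk_in[OF hole]
  and avoids_simplicial = long_hole_walk_avoids_simplicial[OF hole]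
  and avoids_cosimplicial = long_hole_walk_avoids_cosimplicial[OF hole]

lemma avoids_Tv: "w k \<noteq> Tv i"
  by (rule avoids_simplicial) (auto simp: GE_iff)

lemma avoids_Rv_Uv: "w k \<noteq> Rv" "w k \<noteq> Uv"
  by (rule avoids_cosimplicial; auto simp: GE_iff in_GV avoids_Tv)+

lemma avoids_Av: "w k \<noteq> Av i"
proof
  assume k: "w k = Av i"
  have nbr: "w (k + e) \<in> {Cv i, Qv}" if "e \<in> {1, -1}" for e
    using adj[of k "k + e"] that k avoids_Tv avoids_Rv_Uv by (cases "w (k + e)") (auto simp: GE_iff)
  obtain e where e: "e \<in> {1, -1}" "w (k + e) = Cv i" "w (k - e) = Qv"
    using nbr[of 1] nbr[of "-1"] distinct_near[of "k + 1" "k - 1"] by fastforce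
  have "is_lit (w (k + 2 * e))"
    using adj[of "k + e" "k + 2 * e"] nonadj[of k "k + 2 * e"] distinct_near[of k "k + 2 * e"]
      e k avoids_Tv avoids_Rv_Uv by (cases "w (k + 2 * e)") (auto simp: GE_iff)
  then show False
    using nonadj[of "k - e" "k + 2 * e"] e in_GV by (auto simp: GE_iff)
qed

lemma avoids_Pv_Qv: "w k \<notin> {Pv, Qv}"
proof
  assume k: "w k \<in> {Pv, Qv}"
  note others = avoids_Tv avoids_Rv_Uv avoids_Av
  have lits: "is_lit (w (k - 1))" "is_lit (w (k + 1))"
    using adj[of k "k - 1"] adj[of k "k + 1"] nonadj[of "k - 1" "k + 1"]
      distinct_near[of "k - 1" "k + 1"] k others
    by (cases "w (k - 1)"; cases "w (k + 1)"; auto simp: GE_iff)+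
  obtain m where "w (k + 2) = Cv m"
    using adj[of "k + 1" "k + 2"] nonadj[of k "k + 2"] distinct_near[of k "k + 2"] lits k others
    by (cases "w (k + 2)") (auto simp: GE_iff)
  then show False
    using adj[of "k + 2" "k + 3"] nonadj[of k "k + 3"] in_GV[of "k + 3"] k others
    by (cases "w (k + 3)") (auto simp: GE_iff)
qed

lemma literal_or_clause_vertex: "(\<exists>b j. w k = Lit b j) \<or> (\<exists>i. w k = Cv i)"
  using avoids_Tv avoids_Rv_Uv avoids_Av avoids_Pv_Qv by (cases "w k") auto

lemma avoids_Cv: "w k \<noteq> Cv i"
proof
  assume k: "w k = Cv i"
  obtain b j where nbrs: "w (k - 1) = Lit b j" "w (k + 1) = Lit (\<not> b) j"
    using adj[of "k - 1" k] adj[of k "k + 1"] nonadj[of "k - 1" "k + 1"]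
      distinct_near[of "k - 1" "k + 1"] k
      literal_or_clause_vertex[of "k - 1"] literal_or_clause_vertex[of "k + 1"]
    by (auto simp: GE_iff)
  obtain m where "w (k + 2) = Cv m"
    using adj[of "k + 1" "k + 2"] nonadj[of "k - 1" "k + 2"] distinct_near[of "k - 1" "k + 2"]
      distinct_near[of "k + 1" "k + 2"] literal_or_clause_vertex[of "k + 2"]
      in_GV[of "k - 1"] nbrs
    by (auto simp: GE_iff)
  then show False
    using adj[of "k + 2" "k + 3"] nonadj[of "k + 1" "k + 3"] distinct_near[of "k - 1" "k + 3"]
      distinct_near[of "k + 1" "k + 3"] literal_or_clause_vertex[of "k + 3"]
      in_GV[of "k + 1"] nbrs
    by (auto simp: GE_iff)
qed

end

lemma no_long_hole_walk_in_G: "\<not> long_hole_walk (GV I) (GE I) w"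
proof
  assume "long_hole_walk (GV I) (GE I) w"
  then interpret long_hole_in_G I w by unfold_locales
  obtain b j where k: "w 0 = Lit b j" using literal_or_clause_vertex[of 0] avoids_Cv by blast
  have "w d = Lit (\<not> b) j" if "d \<in> {2, 3}" for d
    using nonadj[of 0 d] distinct_near[of 0 d] literal_or_clause_vertex[of d] avoids_Cv
      in_GV[of 0] in_GV[of d] that k
    by (auto simp: GE_iff)
  then show False using distinct_near[of 2 3] by simp
qed

locale long_hole_in_co_G =
  fixes I :: sat_inst and w :: "int \<Rightarrow> vtx"
  assumes hole: "long_hole_walk (GV I) (compl_adj (GE I)) w"
begin

lemmas adj = long_hole_walk_adj[OF hole]
  and nonadj = long_hole_walk_nonadj[OF hole]
  and distinct_near = long_hole_walk_distinct[OF hole]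
  and in_GV = long_hole_walk_in[OF hole]
  and avoids_simplicial = long_hole_walk_avoids_simplicial[OF hole]
  and avoids_cosimplicial = long_hole_walk_avoids_cosimplicial[OF hole]

lemma avoids_Rv_Uv: "w k \<noteq> Rv" "w k \<noteq> Uv"
  by (rule avoids_simplicial; auto simp: compl_adj_def GE_iff)+

lemma avoids_Tv: "w k \<noteq> Tv i"
  by (rule avoids_cosimplicial) (auto simp: compl_adj_def GE_iff)

lemma avoids_Qv: "w k \<noteq> Qv"
  apply (rule avoids_simplicial)
  subgoal for i j
    by (cases "w i"; cases "w j") (auto simp: compl_adj_def GE_iff avoids_Tv)
  done

lemma avoids_Av: "w k \<noteq> Av i"
  by (rule avoids_cosimplicial) (auto simp: compl_adj_def GE_iff avoids_Tv avoids_Rv_Uv avoids_Qv)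

lemma avoids_Pv: "w k \<noteq> Pv"
  apply (rule avoids_simplicial)
  subgoal for i j
    by (cases "w i"; cases "w j") (auto simp: compl_adj_def GE_iff avoids_Tv avoids_Av)
  done

lemma literal_or_clause_vertex: "(\<exists>b j. w k = Lit b j) \<or> (\<exists>i. w k = Cv i)"
  using avoids_Rv_Uv avoids_Tv avoids_Qv avoids_Av avoids_Pv by (cases "w k") auto

lemma literal_neighbours:
  assumes k: "w k = Lit b j"
  obtains e m where "e \<in> {1, -1}" "w (k + e) = Lit (\<not> b) j" "w (k - e) = Cv m"
  using adj[of k "k + 1"] adj[of k "k - 1"] nonadj[of "k - 1" "k + 1"]
    distinct_near[of "k - 1" "k + 1"]
    literal_or_clause_vertex[of "k + 1"] literal_or_clause_vertex[of "k - 1"]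
    in_GV[of k] in_GV[of "k + 1"] in_GV[of "k - 1"] k that[of 1] that[of "-1"]
  by (auto simp: compl_adj_def GE_iff)

lemma avoids_Lit: "w k \<noteq> Lit b j"
proof
  assume k: "w k = Lit b j"
  obtain e m where e: "e \<in> {1, -1}" "w (k + e) = Lit (\<not> b) j" "w (k - e) = Cv m"
    using literal_neighbours k .
  obtain e' m' where e': "e' \<in> {1, -1}" "w (k + e + e') = Lit b j" "w (k + e - e') = Cv m'"
    using literal_neighbours[of "k + e" "\<not> b" j] e by auto
  have "e' = - e" using distinct_near[of k "k + e + e'"] e e' k by auto
  with e' have "w (k + 2 * e) = Cv m'" by (simp add: algebra_simps)
  then show False
    using nonadj[of "k - e" "k + 2 * e"] distinct_near[of "k - e" "k + 2 * e"]
      in_GV[of "k - e"] in_GV[of "k + 2 * e"] e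
    by (auto simp: compl_adj_def GE_iff)
qed

end

lemma no_long_hole_walk_in_co_G: "\<not> long_hole_walk (GV I) (compl_adj (GE I)) w"
proof
  assume "long_hole_walk (GV I) (compl_adj (GE I)) w"
  then interpret long_hole_in_co_G I w by unfold_locales
  obtain i i' where "w 0 = Cv i" "w 2 = Cv i'"
    using literal_or_clause_vertex[of 0] literal_or_clause_vertex[of 2] avoids_Lit by blast
  then show False
    using nonadj[of 0 2] distinct_near[of 0 2] in_GV[of 0] in_GV[of 2]
    by (auto simp: compl_adj_def GE_iff)
qed

theorem lemma8:
  assumes "wf_instance I"
  shows "weakly_chordal (GV I) (GE I)"
  using no_long_hole_walk_in_G no_long_hole_walk_in_co_G
  by (rule weakly_chordal_if_no_long_hole_walk)

end
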